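(* Let $F:\mathcal C\to\mathcal D$ be a morphism of cylinder categories. Then $F$ is homotopy fully faithful if and only if the following holds: for every cofibration $i:A\hookrightarrow B$ in $\mathcal C$ such that $F(i)$ admits a retraction $r:F(B)\to F(A)$ in $\mathcal D$, there is a retraction $r':B\to A$ of $i$ in $\mathcal C$ such that $F(r')\sim_{F(A)} r$ (homotopic relative to $F(A)$).
   Context: A cylinder category is a category $\mathcal C$ with two classes of morphisms, the cofibrations and the weak equivalences (morphisms in both classes are called trivial cofibrations), such that: (1) both classes contain all isomorphisms and are closed under composition; (2) weak equivalences satisfy 2-out-of-6: if $f,g,h$ are composable and $f\circ g$, $g\circ h$ are weak equivalences then $f,g,h,f\circ g\circ h$ are; (3) $\mathcal C$ has an initial object $0$ and every $0\to X$ is a cofibration; (4) pushouts of cofibrations along arbitrary maps exist and are cofibrations; (5) pushouts of trivial cofibrations are trivial cofibrations; (6) for every object $X$ the codiagonal $X\sqcup X\to X$ factors as a cofibration $X\sqcup X\hookrightarrow IX$ followed by a weak equivalence $IX\to X$; (7) every trivial cofibration admits a retraction. A morphism of cylinder categories is a functor preserving cofibrations, weak equivalences, the initial object and pushouts along cofibrations. For a cofibration $A\hookrightarrow B$, a relative cylinder object is a factorization $B\sqcup_A B\hookrightarrow I_AB\xrightarrow{\sim}B$ of the codiagonal into a cofibration followed by a weak equivalence. Two maps $f,g:B\to X$ with $f|_A=g|_A$ are homotopic relative to $A$, written $f\sim_A g$, if $(f,g):B\sqcup_AB\to X$ extends to $I_AB\to X$ for some relative cylinder object. $F$ is homotopy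 fully faithful if for every cofibration $i:A\hookrightarrow B$ in $\mathcal C$, every arrow $x:A\to X$ in $\mathcal C$, and every $v:F(B)\to F(X)$ in $\mathcal D$ with $v\circ F(i)=F(x)$, there is $v':B\to X$ in $\mathcal C$ with $v'\circ i=x$ and $F(v')\sim_{F(A)} v$. *)

theory Defs
  imports Main
begin

section \<open>Categories (explicit carriers, arrows composed as cmp g f = g o f)\<close>

record ('o, 'a) cat =
  ob :: "'o set"
  ar :: "'a set"
  src :: "'a \<Rightarrow> 'o"
  tgt :: "'a \<Rightarrow> 'o"
  ident :: "'o \<Rightarrow> 'a"
  cmp :: "'a \<Rightarrow> 'a \<Rightarrow> 'a"

definition hom :: "('o, 'a, 'm) cat_scheme \<Rightarrow> 'o \<Rightarrow> 'o \<Rightarrow> 'a set" where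
  "hom C X Y = {f \<in> ar C. src C f = X \<and> tgt C f = Y}"

definition category :: "('o, 'a, 'm) cat_scheme \<Rightarrow> bool" where
  "category C \<longleftrightarrow>
     (\<forall>f\<in>ar C. src C f \<in> ob C \<and> tgt C f \<in> ob C) \<and>
     (\<forall>X\<in>ob C. ident C X \<in> hom C X X) \<and>
     (\<forall>f\<in>ar C. \<forall>g\<in>ar C. tgt C f = src C g \<longrightarrow> cmp C g f \<in> hom C (src C f) (tgt C g)) \<and>
     (\<forall>f\<in>ar C. cmp C (ident C (tgt C f)) f = f \<and> cmp C f (ident C (src C f)) = f) \<and>
     (\<forall>f\<in>ar C. \<forall>g\<in>ar C. \<forall>h\<in>ar C. tgt C f = src C g \<and> tgt C g = src C h \<longrightarrow>
        cmp C h (cmp C g f) = cmp C (cmp C h g) f)"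

definition iso :: "('o, 'a, 'm) cat_scheme \<Rightarrow> 'a \<Rightarrow> bool" where
  "iso C f \<longleftrightarrow> f \<in> ar C \<and> (\<exists>g\<in>hom C (tgt C f) (src C f).
      cmp C g f = ident C (src C f) \<and> cmp C f g = ident C (tgt C f))"

definition initial :: "('o, 'a, 'm) cat_scheme \<Rightarrow> 'o \<Rightarrow> bool" where
  "initial C z \<longleftrightarrow> z \<in> ob C \<and> (\<forall>X\<in>ob C. \<exists>!f. f \<in> hom C z X)"

definition is_pushout :: "('o, 'a, 'm) cat_scheme \<Rightarrow> 'a \<Rightarrow> 'a \<Rightarrow> 'a \<Rightarrow> 'a \<Rightarrow> bool" where
  "is_pushout C f g p q \<longleftrightarrow>
     f \<in> ar C \<and> g \<in> ar C \<and> p \<in> ar C \<and> q \<in> ar C \<and>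
     src C f = src C g \<and> src C p = tgt C f \<and> src C q = tgt C g \<and> tgt C p = tgt C q \<and>
     cmp C p f = cmp C q g \<and>
     (\<forall>Y u v. u \<in> hom C (tgt C f) Y \<and> v \<in> hom C (tgt C g) Y \<and> cmp C u f = cmp C v g \<longrightarrow>
        (\<exists>!h. h \<in> hom C (tgt C p) Y \<and> cmp C h p = u \<and> cmp C h q = v))"

record ('o, 'a) cyl = "('o, 'a) cat" +
  cof :: "'a set"
  we :: "'a set"

definition cylinder_category :: "('o, 'a, 'm) cyl_scheme \<Rightarrow> bool" where
  "cylinder_category C \<longleftrightarrow>
     category C \<and>
     cof C \<subseteq> ar C \<and> we C \<subseteq> ar C \<and>
     \<comment> \<open>(1)\<close>
     (\<forall>f. iso C f \<longrightarrow> f \<in> cof C \<and> f \<in> we C) \<and>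
     (\<forall>f\<in>cof C. \<forall>g\<in>cof C. tgt C f = src C g \<longrightarrow> cmp C g f \<in> cof C) \<and>
     (\<forall>f\<in>we C. \<forall>g\<in>we C. tgt C f = src C g \<longrightarrow> cmp C g f \<in> we C) \<and>
     \<comment> \<open>(2) 2-out-of-6\<close>
     (\<forall>f\<in>ar C. \<forall>g\<in>ar C. \<forall>h\<in>ar C. tgt C h = src C g \<and> tgt C g = src C f \<and>
        cmp C f g \<in> we C \<and> cmp C g h \<in> we C \<longrightarrow>
        f \<in> we C \<and> g \<in> we C \<and> h \<in> we C \<and> cmp C f (cmp C g h) \<in> we C) \<and>
     \<comment> \<open>(3)\<close>
     (\<exists>z. initial C z) \<and>
     (\<forall>z X f. initial C z \<and> X \<in> ob C \<and> f \<in> hom C z X \<longrightarrow> f \<in> cof C) \<and>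
     \<comment> \<open>(4)\<close>
     (\<forall>i\<in>cof C. \<forall>f\<in>ar C. src C f = src C i \<longrightarrow> (\<exists>p q. is_pushout C i f p q)) \<and>
     (\<forall>i f p q. i \<in> cof C \<and> is_pushout C i f p q \<longrightarrow> q \<in> cof C) \<and>
     \<comment> \<open>(5)\<close>
     (\<forall>i f p q. i \<in> cof C \<and> i \<in> we C \<and> is_pushout C i f p q \<longrightarrow> q \<in> cof C \<and> q \<in> we C) \<and>
     \<comment> \<open>(6) cylinder objects: for every coproduct X + X (pushout over the initial object)
         the codiagonal factors as a cofibration followed by a weak equivalence\<close>
     (\<forall>z X e j1 j2. initial C z \<and> X \<in> ob C \<and> e \<in> hom C z X \<and> is_pushout C e e j1 j2 \<longrightarrow>
        (\<exists>I k s. k \<in> hom C (tgt C j1) I \<and> k \<in> cof C \<and> s \<in> hom C I X \<and> s \<in> we C \<and>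
           cmp C s (cmp C k j1) = ident C X \<and> cmp C s (cmp C k j2) = ident C X)) \<and>
     \<comment> \<open>(7)\<close>
     (\<forall>i. i \<in> cof C \<and> i \<in> we C \<longrightarrow>
        (\<exists>r\<in>hom C (tgt C i) (src C i). cmp C r i = ident C (src C i)))"

text \<open>Homotopy relative to A (for a cofibration i : A -> B) between f g : B -> X with
  f o i = g o i: there is a relative cylinder object  B +_A B -> I_A B -> B  (a pushout
  j1, j2 of i along i, a cofibration k and a weak equivalence s composing to the codiagonal)
  and an extension H : I_A B -> X of (f,g).\<close>
definition htpy_rel :: "('o, 'a, 'm) cyl_scheme \<Rightarrow> 'a \<Rightarrow> 'a \<Rightarrow> 'a \<Rightarrow> bool" where
  "htpy_rel C i f g \<longleftrightarrow>
     i \<in> cof C \<and> f \<in> ar C \<and> g \<in> ar C \<and>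
     src C f = tgt C i \<and> src C g = tgt C i \<and> tgt C f = tgt C g \<and>
     cmp C f i = cmp C g i \<and>
     (\<exists>j1 j2 I k s H. is_pushout C i i j1 j2 \<and>
        k \<in> hom C (tgt C j1) I \<and> k \<in> cof C \<and>
        s \<in> hom C I (tgt C i) \<and> s \<in> we C \<and>
        cmp C s (cmp C k j1) = ident C (tgt C i) \<and> cmp C s (cmp C k j2) = ident C (tgt C i) \<and>
        H \<in> hom C I (tgt C f) \<and> cmp C H (cmp C k j1) = f \<and> cmp C H (cmp C k j2) = g)"

definition cyl_morphism ::
  "('o, 'a, 'm) cyl_scheme \<Rightarrow> ('p, 'b, 'n) cyl_scheme \<Rightarrow> ('o \<Rightarrow> 'p) \<Rightarrow> ('a \<Rightarrow> 'b) \<Rightarrow> bool" where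
  "cyl_morphism C D Fo Fa \<longleftrightarrow>
     cylinder_category C \<and> cylinder_category D \<and>
     (\<forall>X\<in>ob C. Fo X \<in> ob D) \<and>
     (\<forall>f\<in>ar C. Fa f \<in> hom D (Fo (src C f)) (Fo (tgt C f))) \<and>
     (\<forall>X\<in>ob C. Fa (ident C X) = ident D (Fo X)) \<and>
     (\<forall>f\<in>ar C. \<forall>g\<in>ar C. tgt C f = src C g \<longrightarrow> Fa (cmp C g f) = cmp D (Fa g) (Fa f)) \<and>
     (\<forall>f\<in>cof C. Fa f \<in> cof D) \<and>
     (\<forall>f\<in>we C. Fa f \<in> we D) \<and>
     (\<forall>z. initial C z \<longrightarrow> initial D (Fo z)) \<and>
     (\<forall>i f p q. i \<in> cof C \<and> is_pushout C i f p q \<longrightarrow> is_pushout D (Fa i) (Fa f) (Fa p) (Fa q))"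

definition homotopy_fully_faithful ::
  "('o, 'a, 'm) cyl_scheme \<Rightarrow> ('p, 'b, 'n) cyl_scheme \<Rightarrow> ('o \<Rightarrow> 'p) \<Rightarrow> ('a \<Rightarrow> 'b) \<Rightarrow> bool" where
  "homotopy_fully_faithful C D Fo Fa \<longleftrightarrow>
     (\<forall>i A B x X v. i \<in> hom C A B \<and> i \<in> cof C \<and> x \<in> hom C A X \<and>
        v \<in> hom D (Fo B) (Fo X) \<and> cmp D v (Fa i) = Fa x \<longrightarrow>
        (\<exists>v'. v' \<in> hom C B X \<and> cmp C v' i = x \<and> htpy_rel D (Fa i) (Fa v') v))"

end

theory Submission
  imports Defs
begin

text \<open>The forward direction is the special case x = id. Conversely, given a cofibration
  i : A \<rightarrow> B, a map x : A \<rightarrow> X and v : F B \<rightarrow> F X extending F x, push i out along x to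
  obtain a cofibration q : X \<rightarrow> P and p : B \<rightarrow> P. Since F preserves this pushout, v and the
  identity of F X glue to a retraction r of F q; lifting r to a retraction r' of q with
  F r' homotopic to r relative to F X, the map r' p extends x. What remains is that homotopies
  relative to q restrict along p to homotopies relative to i. This needs a comparison map from a
  relative cylinder of i to one of q, and the homotopy is transported along it by factoring maps
  as a cofibration followed by a weak equivalence (Brown's factorization lemma, via mapping
  cylinders) and extending along trivial cofibrations, which have retractions.\<close>

notation cmp (infixr "\<cdot>\<index>" 55)

locale Category =
  fixes C :: "('o, 'a, 'm) cat_scheme" (structure)
  assumes category: "category C"
begin

lemma src_ob [simp]: "f \<in> ar C \<Longrightarrow> src C f \<in> ob C"
  and tgt_ob [simp]: "f \<in> ar C \<Longrightarrow> tgt C f \<in> ob C"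
  using category unfolding category_def by auto

lemma ident_arr [simp]: "X \<in> ob C \<Longrightarrow> ident C X \<in> ar C"
  and src_ident [simp]: "X \<in> ob C \<Longrightarrow> src C (ident C X) = X"
  and tgt_ident [simp]: "X \<in> ob C \<Longrightarrow> tgt C (ident C X) = X"
  using category unfolding category_def hom_def by auto

lemma comp_arr [simp]: "f \<in> ar C \<Longrightarrow> g \<in> ar C \<Longrightarrow> tgt C f = src C g \<Longrightarrow> g \<cdot> f \<in> ar C"
  and src_comp [simp]: "f \<in> ar C \<Longrightarrow> g \<in> ar C \<Longrightarrow> tgt C f = src C g \<Longrightarrow> src C (g \<cdot> f) = src C f"
  and tgt_comp [simp]: "f \<in> ar C \<Longrightarrow> g \<in> ar C \<Longrightarrow> tgt C f = src C g \<Longrightarrow> tgt C (g \<cdot> f) = tgt C g"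
  using category unfolding category_def hom_def by auto

lemma comp_ident_left [simp]: "f \<in> ar C \<Longrightarrow> tgt C f = Y \<Longrightarrow> ident C Y \<cdot> f = f"
  and comp_ident_right [simp]: "f \<in> ar C \<Longrightarrow> src C f = X \<Longrightarrow> f \<cdot> ident C X = f"
  using category unfolding category_def by auto

lemma comp_assoc [simp]:
  "\<lbrakk>f \<in> ar C; g \<in> ar C; h \<in> ar C; tgt C f = src C g; tgt C g = src C h\<rbrakk>
    \<Longrightarrow> (h \<cdot> g) \<cdot> f = h \<cdot> g \<cdot> f"
  using category unfolding category_def by auto

text \<open>The simplifier normalises composites to right-nested form; this rule makes an equation
  between composites applicable inside such a normal form.\<close>

lemma comp_reassoc:
  "\<lbrakk>g \<cdot> f = h; f \<in> ar C; g \<in> ar C; x \<in> ar C; tgt C x = src C f; tgt C f = src C g\<rbrakk>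
    \<Longrightarrow> g \<cdot> f \<cdot> x = h \<cdot> x"
  by (metis comp_assoc)

lemma comp_in_hom [intro]: "f \<in> hom C X Y \<Longrightarrow> g \<in> hom C Y Z \<Longrightarrow> g \<cdot> f \<in> hom C X Z"
  by (simp add: hom_def)

lemma ident_in_hom [intro]: "X \<in> ob C \<Longrightarrow> ident C X \<in> hom C X X"
  by (simp add: hom_def)

lemma pushoutD:
  assumes "is_pushout C f g p q"
  shows "f \<in> ar C" "g \<in> ar C" "p \<in> ar C" "q \<in> ar C" "src C g = src C f"
    "src C p = tgt C f" "src C q = tgt C g" "tgt C q = tgt C p" "p \<cdot> f = q \<cdot> g"
  using assms unfolding is_pushout_def by auto

lemma pushout_sym: "is_pushout C f g p q \<Longrightarrow> is_pushout C g f q p"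
  unfolding is_pushout_def by (auto; metis)

lemma pushout_induce:
  assumes "is_pushout C f g p q" "u \<in> hom C (tgt C f) Y" "v \<in> hom C (tgt C g) Y" "u \<cdot> f = v \<cdot> g"
  obtains h where "h \<in> hom C (tgt C p) Y" "h \<cdot> p = u" "h \<cdot> q = v"
  using assms unfolding is_pushout_def by blast

lemma pushout_maps_eq:
  assumes P: "is_pushout C f g p q" and h: "h \<in> hom C (tgt C p) Y" "h' \<in> hom C (tgt C p) Y"
    and "h \<cdot> p = h' \<cdot> p" "h \<cdot> q = h' \<cdot> q"
  shows "h = h'"
proof -
  have "h \<cdot> p \<in> hom C (tgt C f) Y" "h \<cdot> q \<in> hom C (tgt C g) Y"
    and "(h \<cdot> p) \<cdot> f = (h \<cdot> q) \<cdot> g"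
    using pushoutD[OF P] h by (simp_all add: hom_def)
  with P have "\<exists>!k. k \<in> hom C (tgt C p) Y \<and> k \<cdot> p = h \<cdot> p \<and> k \<cdot> q = h \<cdot> q"
    unfolding is_pushout_def by blast
  with assms(2-) show ?thesis by metis
qed

lemma pushout_paste:
  assumes P1: "is_pushout C f g p q" and P2: "is_pushout C q h p' q'"
  shows "is_pushout C f (h \<cdot> g) (p' \<cdot> p) q'"
proof -
  note D1 = pushoutD[OF P1] and D2 = pushoutD[OF P2]
  have comm: "(p' \<cdot> p) \<cdot> f = q' \<cdot> h \<cdot> g"
    using D1 D2 comp_reassoc[OF D2(9)] by simp
  have induce: "\<exists>k. k \<in> hom C (tgt C p') Y \<and> k \<cdot> p' \<cdot> p = u \<and> k \<cdot> q' = v"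
    if u: "u \<in> hom C (tgt C f) Y" and v: "v \<in> hom C (tgt C h) Y" and uv: "u \<cdot> f = v \<cdot> h \<cdot> g" for u v Y
  proof -
    have vh: "v \<cdot> h \<in> hom C (tgt C g) Y" and "u \<cdot> f = (v \<cdot> h) \<cdot> g"
      using v uv D1 D2 by (auto simp: hom_def)
    then obtain w where w: "w \<in> hom C (tgt C p) Y" "w \<cdot> p = u" "w \<cdot> q = v \<cdot> h"
      using pushout_induce[OF P1 u vh] by blast
    then obtain k where "k \<in> hom C (tgt C p') Y" "k \<cdot> p' = w" "k \<cdot> q' = v"
      using pushout_induce[OF P2 _ v] D1 D2 by (auto simp: hom_def)
    then show ?thesis
      using w D1 D2 by (auto simp: hom_def)
  qed
  have unique: "k = k'"
    if k: "k \<in> hom C (tgt C p') Y" "k' \<in> hom C (tgt C p') Y"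
      and e1: "k \<cdot> p' \<cdot> p = k' \<cdot> p' \<cdot> p" and e2: "k \<cdot> q' = k' \<cdot> q'" for k k' Y
  proof -
    have "k \<cdot> p' \<cdot> q = k' \<cdot> p' \<cdot> q"
      using k D2 comp_reassoc[OF D2(9)] comp_reassoc[OF e2] by (simp add: hom_def)
    then have "k \<cdot> p' = k' \<cdot> p'"
      using pushout_maps_eq[OF P1, of "k \<cdot> p'" Y "k' \<cdot> p'"] k e1 D1 D2 by (simp add: hom_def)
    then show ?thesis
      using pushout_maps_eq[OF P2 k] e2 by blast
  qed
  show ?thesis
    unfolding is_pushout_def
    using D1 D2 comm induce unique by (simp add: hom_def) metis
qed

end

locale Cylinder_Category = Category C for C :: "('o, 'a, 'm) cyl_scheme" (structure) +
  assumes cylinder_category: "cylinder_category C"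
begin

lemma cylinder_axioms:
  "cof C \<subseteq> ar C" "we C \<subseteq> ar C"
  "\<And>f. iso C f \<Longrightarrow> f \<in> cof C \<and> f \<in> we C"
  "\<And>f g. \<lbrakk>f \<in> cof C; g \<in> cof C; tgt C f = src C g\<rbrakk> \<Longrightarrow> g \<cdot> f \<in> cof C"
  "\<And>f g h. \<lbrakk>f \<in> ar C; g \<in> ar C; h \<in> ar C; tgt C h = src C g; tgt C g = src C f;
      f \<cdot> g \<in> we C; g \<cdot> h \<in> we C\<rbrakk> \<Longrightarrow> f \<in> we C \<and> g \<in> we C \<and> h \<in> we C"
  "\<exists>z. initial C z"
  "\<And>z X e. \<lbrakk>initial C z; X \<in> ob C; e \<in> hom C z X\<rbrakk> \<Longrightarrow> e \<in> cof C"
  "\<And>i f. \<lbrakk>i \<in> cof C; f \<in> ar C; src C f = src C i\<rbrakk> \<Longrightarrow> \<exists>p q. is_pushout C i f p q"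
  "\<And>i f p q. \<lbrakk>i \<in> cof C; is_pushout C i f p q\<rbrakk> \<Longrightarrow> q \<in> cof C"
  "\<And>i f p q. \<lbrakk>i \<in> cof C; i \<in> we C; is_pushout C i f p q\<rbrakk> \<Longrightarrow> q \<in> we C"
  "\<And>z X e j1 j2. \<lbrakk>initial C z; X \<in> ob C; e \<in> hom C z X; is_pushout C e e j1 j2\<rbrakk> \<Longrightarrow>
        \<exists>I k s. k \<in> hom C (tgt C j1) I \<and> k \<in> cof C \<and> s \<in> hom C I X \<and> s \<in> we C \<and>
           s \<cdot> k \<cdot> j1 = ident C X \<and> s \<cdot> k \<cdot> j2 = ident C X"
  "\<And>i. \<lbrakk>i \<in> cof C; i \<in> we C\<rbrakk> \<Longrightarrow> \<exists>r\<in>hom C (tgt C i) (src C i). r \<cdot> i = ident C (src C i)"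
  using cylinder_category unfolding cylinder_category_def by meson+

lemma cof_arr: "f \<in> cof C \<Longrightarrow> f \<in> ar C"
  and we_arr: "f \<in> we C \<Longrightarrow> f \<in> ar C"
  using cylinder_axioms(1,2) by blast+

lemmas iso_cof_we = cylinder_axioms(3)
  and cof_comp = cylinder_axioms(4)
  and we_two_out_of_six = cylinder_axioms(5)
  and initial_exists = cylinder_axioms(6)
  and initial_arrow_cof = cylinder_axioms(7)
  and pushout_exists = cylinder_axioms(8)
  and pushout_cof = cylinder_axioms(9)
  and pushout_we = cylinder_axioms(10)
  and cylinder_exists = cylinder_axioms(11)
  and trivial_cof_retraction = cylinder_axioms(12)

lemma ident_we: "X \<in> ob C \<Longrightarrow> ident C X \<in> we C"
  using iso_cof_we[of "ident C X"] unfolding iso_def hom_def by force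

lemma we_comp_cancel_left:
  assumes "f \<in> ar C" "g \<in> we C" "tgt C f = src C g" "g \<cdot> f \<in> we C"
  shows "f \<in> we C"
proof -
  have "g \<in> ar C"
    using assms(2) by (rule we_arr)
  then have "ident C (tgt C g) \<cdot> g \<in> we C"
    using assms(2) by simp
  then show ?thesis
    using we_two_out_of_six[of "ident C (tgt C g)" g f] assms \<open>g \<in> ar C\<close> by simp
qed

lemma we_comp_cancel_right:
  assumes "f \<in> we C" "g \<in> ar C" "tgt C f = src C g" "g \<cdot> f \<in> we C"
  shows "g \<in> we C"
proof -
  have "f \<in> ar C"
    using assms(1) by (rule we_arr)
  then have "f \<cdot> ident C (src C f) \<in> we C"
    using assms(1) by simp
  then show ?thesis
    using we_two_out_of_six[of g f "ident C (src C f)"] assms \<open>f \<in> ar C\<close> by simp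
qed

lemma trivial_cof_extension:
  assumes c: "c \<in> hom C U W" "c \<in> cof C" "c \<in> we C" and h: "h \<in> hom C U Y"
  obtains h' where "h' \<in> hom C W Y" "h' \<cdot> c = h"
proof -
  obtain p q where P: "is_pushout C c h p q"
    using pushout_exists[OF c(2), of h] c h by (auto simp: hom_def)
  note D = pushoutD[OF P]
  obtain r where r: "r \<in> hom C (tgt C q) Y" "r \<cdot> q = ident C Y"
    using trivial_cof_retraction[OF pushout_cof[OF c(2) P] pushout_we[OF c(2,3) P]] D h
    by (auto simp: hom_def)
  have "(r \<cdot> p) \<cdot> c = h"
    using r c h D comp_reassoc[OF D(9)] comp_reassoc[OF r(2)] by (simp add: hom_def)
  with r c D show thesis
    by (intro that[of "r \<cdot> p"]) (auto simp: hom_def)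
qed

lemma section_of_we:
  assumes "f \<in> hom C X Y" "g \<in> hom C Y X" "g \<in> we C" "g \<cdot> f = ident C X"
  shows "f \<in> we C"
proof (rule we_comp_cancel_left[where g = g])
  have "X \<in> ob C"
    using assms(1) src_ob by (auto simp: hom_def)
  then show "g \<cdot> f \<in> we C"
    using assms(4) ident_we by simp
qed (use assms in \<open>simp_all add: hom_def\<close>)

lemma retraction_of_we:
  assumes "f \<in> hom C X Y" "g \<in> hom C Y X" "f \<in> we C" "g \<cdot> f = ident C X"
  shows "g \<in> we C"
proof (rule we_comp_cancel_right[where f = f])
  have "X \<in> ob C"
    using assms(1) src_ob by (auto simp: hom_def)
  then show "g \<cdot> f \<in> we C"
    using assms(4) ident_we by simp
qed (use assms in \<open>simp_all add: hom_def\<close>)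

lemma coproduct_pushout_cof:
  assumes z: "initial C z" and e: "e \<in> hom C z U" and P0: "is_pushout C e e j1 j2"
    and f: "f \<in> hom C U V" and P1: "is_pushout C j1 f t1 t2"
  shows "t1 \<cdot> j2 \<in> cof C"
proof -
  have "is_pushout C (f \<cdot> e) e t2 (t1 \<cdot> j2)"
    using pushout_sym[OF pushout_paste[OF pushout_sym[OF P0] P1]] .
  moreover have "f \<cdot> e \<in> cof C"
    using initial_arrow_cof[OF z _ comp_in_hom[OF e f]] f by (auto simp: hom_def)
  ultimately show ?thesis
    using pushout_cof by blast
qed

lemma cylinder_object:
  assumes U: "U \<in> ob C"
  obtains z e j1 j2 I k s where "initial C z" "e \<in> hom C z U" "is_pushout C e e j1 j2"
    "j1 \<in> cof C" "k \<in> hom C (tgt C j1) I" "k \<in> cof C" "s \<in> hom C I U" "s \<in> we C"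
    "s \<cdot> k \<cdot> j1 = ident C U" "s \<cdot> k \<cdot> j2 = ident C U"
proof -
  obtain z where z: "initial C z"
    using initial_exists by blast
  then obtain e where e: "e \<in> hom C z U"
    using U unfolding initial_def by blast
  have e_cof: "e \<in> cof C"
    using initial_arrow_cof[OF z U e] .
  then obtain j1 j2 where P0: "is_pushout C e e j1 j2"
    using pushout_exists[OF e_cof, of e] cof_arr by blast
  moreover obtain I k s where "k \<in> hom C (tgt C j1) I" "k \<in> cof C" "s \<in> hom C I U" "s \<in> we C"
    "s \<cdot> k \<cdot> j1 = ident C U" "s \<cdot> k \<cdot> j2 = ident C U"
    using cylinder_exists[OF z U e P0] by blast
  ultimately show thesis
    using that[OF z e P0 pushout_cof[OF e_cof pushout_sym[OF P0]]] by blast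
qed

lemma factorization:
  assumes f: "f \<in> hom C U V"
  obtains M c r where "c \<in> hom C U M" "c \<in> cof C" "r \<in> hom C M V" "r \<in> we C" "r \<cdot> c = f"
proof -
  have U: "U \<in> ob C"
    using f by (auto simp: hom_def)
  obtain z e j1 j2 I k s where z: "initial C z" and e: "e \<in> hom C z U"
    and P0: "is_pushout C e e j1 j2" and j1_cof: "j1 \<in> cof C"
    and cyl: "k \<in> hom C (tgt C j1) I" "k \<in> cof C" "s \<in> hom C I U" "s \<in> we C"
      "s \<cdot> k \<cdot> j1 = ident C U" "s \<cdot> k \<cdot> j2 = ident C U"
    by (rule cylinder_object[OF U])
  note D0 = pushoutD[OF P0]
  text \<open>The mapping cylinder M of f: glue the cylinder I to V along the end j1 via f. Then c is
    the inclusion of the other end and r collapses M onto V.\<close>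
  obtain t1 t2 where P1: "is_pushout C j1 f t1 t2"
    using pushout_exists[OF j1_cof, of f] f e D0 by (auto simp: hom_def)
  note D1 = pushoutD[OF P1]
  obtain a b where P2: "is_pushout C k t1 a b"
    using pushout_exists[OF cyl(2), of t1] cyl D1 by (auto simp: hom_def)
  note D2 = pushoutD[OF P2]
  obtain w where w: "w \<in> hom C (tgt C t1) V" "w \<cdot> t1 = f \<cdot> s \<cdot> k" "w \<cdot> t2 = ident C V"
  proof (rule pushout_induce[OF P1])
    show "(f \<cdot> s \<cdot> k) \<cdot> j1 = ident C V \<cdot> f"
      using f cyl D0 comp_reassoc[OF cyl(5)] by (simp add: hom_def)
  qed (use f cyl D0 D1 in \<open>auto simp: hom_def\<close>)
  obtain r where r: "r \<in> hom C (tgt C a) V" "r \<cdot> a = f \<cdot> s" "r \<cdot> b = w"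
  proof (rule pushout_induce[OF P2])
    show "(f \<cdot> s) \<cdot> k = w \<cdot> t1"
      using f cyl w D1 by (simp add: hom_def)
  qed (use f cyl w D1 D2 in \<open>auto simp: hom_def\<close>)
  have c_cof: "b \<cdot> t1 \<cdot> j2 \<in> cof C"
    using cof_comp[OF coproduct_pushout_cof[OF z e P0 f P1] pushout_cof[OF cyl(2) P2]] D0 D1 D2
    by simp
  have rc: "r \<cdot> b \<cdot> t1 \<cdot> j2 = f"
    using f cyl w r D0 D1 D2 comp_reassoc[OF r(3)] comp_reassoc[OF w(2)] comp_reassoc[OF cyl(6)]
    by (simp add: hom_def)
  have "k \<cdot> j1 \<in> cof C" "k \<cdot> j1 \<in> we C"
    using cof_comp[OF j1_cof cyl(2)] section_of_we[of "k \<cdot> j1" U I s] cyl e D0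
    by (simp_all add: hom_def)
  then have "b \<cdot> t2 \<in> we C"
    using pushout_we pushout_sym[OF pushout_paste[OF pushout_sym[OF P1] pushout_sym[OF P2]]]
    by blast
  then have "r \<in> we C"
    using retraction_of_we[of "b \<cdot> t2" V _ r] f w r D1 D2 comp_reassoc[OF r(3)] by (simp add: hom_def)
  with that[of "b \<cdot> t1 \<cdot> j2"] show thesis
    using c_cof rc r f D0 D1 D2 by (simp add: hom_def)
qed

lemma relative_cylinder:
  assumes a: "a \<in> hom C A B" "a \<in> cof C"
  obtains j1 j2 J k s where "is_pushout C a a j1 j2" "k \<in> hom C (tgt C j1) J" "k \<in> cof C"
    "s \<in> hom C J B" "s \<in> we C" "s \<cdot> k \<cdot> j1 = ident C B" "s \<cdot> k \<cdot> j2 = ident C B"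
proof -
  obtain j1 j2 where P: "is_pushout C a a j1 j2"
    using pushout_exists[OF a(2), of a] cof_arr[OF a(2)] by blast
  have B: "B \<in> ob C"
    using a(1) by (auto simp: hom_def)
  obtain d where d: "d \<in> hom C (tgt C j1) B" "d \<cdot> j1 = ident C B" "d \<cdot> j2 = ident C B"
    using pushout_induce[OF P, of "ident C B" B "ident C B"] a B pushoutD[OF P]
    by (auto simp: hom_def)
  obtain J k s where f: "k \<in> hom C (tgt C j1) J" "k \<in> cof C" "s \<in> hom C J B" "s \<in> we C"
    and sk: "s \<cdot> k = d"
    using factorization[OF d(1)] by blast
  have "s \<cdot> k \<cdot> j1 = ident C B" "s \<cdot> k \<cdot> j2 = ident C B"
    using d f comp_reassoc[OF sk] pushoutD[OF P] by (simp_all add: hom_def)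
  with that[OF P f] show thesis
    by blast
qed

lemma cof_extension_through_we:
  assumes k: "k \<in> hom C Q J" "k \<in> cof C" and u: "u \<in> hom C Q I"
    and s: "s \<in> hom C I P" "s \<in> we C" and g: "g \<in> hom C J P" "g \<cdot> k = s \<cdot> u"
    and h: "h \<in> hom C I Y"
  obtains h' where "h' \<in> hom C J Y" "h' \<cdot> k = h \<cdot> u"
proof -
  obtain a b where P: "is_pushout C k u a b"
    using pushout_exists[OF k(2), of u] k u by (auto simp: hom_def)
  note D = pushoutD[OF P]
  obtain r where r: "r \<in> hom C (tgt C a) P" "r \<cdot> a = g" "r \<cdot> b = s"
    using pushout_induce[OF P, of g P s] g s k u by (auto simp: hom_def)
  obtain W c w where c: "c \<in> hom C (tgt C a) W" "c \<in> cof C" "w \<in> hom C W P" "w \<in> we C" "w \<cdot> c = r"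
    using factorization[OF r(1)] by blast
  have cb: "c \<cdot> b \<in> hom C I W" "c \<cdot> b \<in> cof C"
    using cof_comp[OF pushout_cof[OF k(2) P] c(2)] c u D by (auto simp: hom_def)
  moreover have "c \<cdot> b \<in> we C"
    using we_comp_cancel_left[of "c \<cdot> b" w] c r s u D comp_reassoc[OF c(5)]
    by (simp add: hom_def)
  ultimately obtain h1 where h1: "h1 \<in> hom C W Y" "h1 \<cdot> c \<cdot> b = h"
    using trivial_cof_extension h by blast
  have "(h1 \<cdot> c \<cdot> a) \<cdot> k = h \<cdot> u"
    using h1 c u k D comp_reassoc[OF D(9)] comp_reassoc[OF h1(2)] by (simp add: hom_def)
  with h1 c k D show thesis
    by (intro that[of "h1 \<cdot> c \<cdot> a"]) (auto simp: hom_def)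
qed

end

section \<open>Relative homotopy\<close>

lemma htpy_relI:
  assumes "i \<in> hom C A B" "i \<in> cof C" "f \<in> hom C B Y" "g \<in> hom C B Y" "f \<cdot>\<^bsub>C\<^esub> i = g \<cdot>\<^bsub>C\<^esub> i"
    and "is_pushout C i i j1 j2" "k \<in> hom C (tgt C j1) I" "k \<in> cof C" "s \<in> hom C I B" "s \<in> we C"
    and "s \<cdot>\<^bsub>C\<^esub> k \<cdot>\<^bsub>C\<^esub> j1 = ident C B" "s \<cdot>\<^bsub>C\<^esub> k \<cdot>\<^bsub>C\<^esub> j2 = ident C B"
    and "H \<in> hom C I Y" "H \<cdot>\<^bsub>C\<^esub> k \<cdot>\<^bsub>C\<^esub> j1 = f" "H \<cdot>\<^bsub>C\<^esub> k \<cdot>\<^bsub>C\<^esub> j2 = g"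
  shows "htpy_rel C i f g"
proof -
  have B: "B = tgt C i" and Y: "Y = tgt C f"
    using assms(1,3) by (simp_all add: hom_def)
  have "f \<in> ar C" "g \<in> ar C" "src C f = tgt C i" "src C g = tgt C i" "tgt C f = tgt C g"
    using assms(3,4) B Y by (auto simp: hom_def)
  then show ?thesis
    unfolding htpy_rel_def using assms(2,5-) unfolding B Y by blast
qed

lemma htpy_relE:
  assumes "htpy_rel C i f g"
  obtains j1 j2 I k s H where "i \<in> cof C" "f \<in> hom C (tgt C i) (tgt C f)"
    "g \<in> hom C (tgt C i) (tgt C f)" "f \<cdot>\<^bsub>C\<^esub> i = g \<cdot>\<^bsub>C\<^esub> i"
    "is_pushout C i i j1 j2" "k \<in> hom C (tgt C j1) I" "k \<in> cof C"
    "s \<in> hom C I (tgt C i)" "s \<in> we C"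
    "s \<cdot>\<^bsub>C\<^esub> k \<cdot>\<^bsub>C\<^esub> j1 = ident C (tgt C i)" "s \<cdot>\<^bsub>C\<^esub> k \<cdot>\<^bsub>C\<^esub> j2 = ident C (tgt C i)"
    "H \<in> hom C I (tgt C f)" "H \<cdot>\<^bsub>C\<^esub> k \<cdot>\<^bsub>C\<^esub> j1 = f" "H \<cdot>\<^bsub>C\<^esub> k \<cdot>\<^bsub>C\<^esub> j2 = g"
proof -
  have "f \<in> hom C (tgt C i) (tgt C f)" "g \<in> hom C (tgt C i) (tgt C f)"
    using assms unfolding htpy_rel_def hom_def by auto
  with assms that show thesis
    unfolding htpy_rel_def by blast
qed

context Cylinder_Category begin

lemma htpy_rel_pushout:
  assumes Pa: "is_pushout C a x p q" and a_cof: "a \<in> cof C" and fg: "htpy_rel C q f g"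
  shows "htpy_rel C a (f \<cdot> p) (g \<cdot> p)"
proof -
  note Da = pushoutD[OF Pa]
  obtain j1 j2 I k s H where "q \<in> cof C"
    and f: "f \<in> hom C (tgt C q) (tgt C f)" and g: "g \<in> hom C (tgt C q) (tgt C f)"
    and fq: "f \<cdot> q = g \<cdot> q" and Pq: "is_pushout C q q j1 j2"
    and k: "k \<in> hom C (tgt C j1) I" "k \<in> cof C" and s: "s \<in> hom C I (tgt C q)" "s \<in> we C"
    and sk: "s \<cdot> k \<cdot> j1 = ident C (tgt C q)" "s \<cdot> k \<cdot> j2 = ident C (tgt C q)"
    and H: "H \<in> hom C I (tgt C f)" "H \<cdot> k \<cdot> j1 = f" "H \<cdot> k \<cdot> j2 = g"
    by (rule htpy_relE[OF fg])
  note Dq = pushoutD[OF Pq]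
  obtain j1' j2' J kk ss where Pa': "is_pushout C a a j1' j2'"
    and kk: "kk \<in> hom C (tgt C j1') J" "kk \<in> cof C" and ss: "ss \<in> hom C J (tgt C a)" "ss \<in> we C"
    and ssk: "ss \<cdot> kk \<cdot> j1' = ident C (tgt C a)" "ss \<cdot> kk \<cdot> j2' = ident C (tgt C a)"
    by (rule relative_cylinder[of a "src C a" "tgt C a"]) (use Da a_cof in \<open>auto simp: hom_def\<close>)
  note Da' = pushoutD[OF Pa']
  text \<open>The ends of the cylinder of q, restricted along p, glue to a comparison map u from
    B +_A B; the homotopy H \<cdot> u then extends along the cofibration kk.\<close>
  obtain u where u: "u \<in> hom C (tgt C j1') I" "u \<cdot> j1' = k \<cdot> j1 \<cdot> p" "u \<cdot> j2' = k \<cdot> j2 \<cdot> p"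
  proof (rule pushout_induce[OF Pa'])
    show "(k \<cdot> j1 \<cdot> p) \<cdot> a = (k \<cdot> j2 \<cdot> p) \<cdot> a"
      using k Da Dq comp_reassoc[OF Dq(9)] by (simp add: hom_def)
  qed (use k Da Dq in \<open>auto simp: hom_def\<close>)
  have "(p \<cdot> ss) \<cdot> kk = s \<cdot> u"
  proof (rule pushout_maps_eq[OF Pa'])
    show "((p \<cdot> ss) \<cdot> kk) \<cdot> j1' = (s \<cdot> u) \<cdot> j1'" "((p \<cdot> ss) \<cdot> kk) \<cdot> j2' = (s \<cdot> u) \<cdot> j2'"
      using ss kk s u k ssk Da Da' Dq comp_reassoc[OF sk(1)] comp_reassoc[OF sk(2)]
      by (simp_all add: hom_def)
  qed (use ss kk s u Da Da' in \<open>auto simp: hom_def\<close>)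
  then obtain H' where H': "H' \<in> hom C J (tgt C f)" "H' \<cdot> kk = H \<cdot> u"
    using cof_extension_through_we[OF kk u(1) s, of "p \<cdot> ss" "H"] ss Da H(1) by (auto simp: hom_def)
  have ends: "H' \<cdot> kk \<cdot> j1' = f \<cdot> p" "H' \<cdot> kk \<cdot> j2' = g \<cdot> p"
    using H' u H k kk Da Da' Dq comp_reassoc[OF H'(2)] comp_reassoc[OF H(2)] comp_reassoc[OF H(3)]
    by (simp_all add: hom_def)
  have comm: "(f \<cdot> p) \<cdot> a = (g \<cdot> p) \<cdot> a"
    using f g Da Dq comp_reassoc[OF Da(9)] comp_reassoc[OF fq] by (simp add: hom_def)
  show ?thesis
    by (rule htpy_relI[OF _ a_cof _ _ comm Pa' kk ss ssk H'(1) ends])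
      (use f g Da in \<open>simp_all add: hom_def\<close>)
qed

end

section \<open>Homotopy fully faithful morphisms\<close>

definition lifts_cof_retractions_up_to_htpy ::
  "('o, 'a, 'm) cyl_scheme \<Rightarrow> ('p, 'b, 'n) cyl_scheme \<Rightarrow> ('o \<Rightarrow> 'p) \<Rightarrow> ('a \<Rightarrow> 'b) \<Rightarrow> bool" where
  "lifts_cof_retractions_up_to_htpy C D Fo Fa \<longleftrightarrow>
     (\<forall>i A B r. i \<in> hom C A B \<and> i \<in> cof C \<and>
        r \<in> hom D (Fo B) (Fo A) \<and> r \<cdot>\<^bsub>D\<^esub> Fa i = ident D (Fo A) \<longrightarrow>
        (\<exists>r'. r' \<in> hom C B A \<and> r' \<cdot>\<^bsub>C\<^esub> i = ident C A \<and> htpy_rel D (Fa i) (Fa r') r))"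

locale Cylinder_Morphism =
  fixes C :: "('o, 'a, 'm) cyl_scheme" (structure) and D :: "('p, 'b, 'n) cyl_scheme" (structure)
    and Fo :: "'o \<Rightarrow> 'p" and Fa :: "'a \<Rightarrow> 'b"
  assumes cyl_morphism: "cyl_morphism C D Fo Fa"
begin

lemma cylinder_categories: "cylinder_category C" "cylinder_category D"
  using cyl_morphism unfolding cyl_morphism_def by blast+

sublocale C: Cylinder_Category C
proof
  show "category C"
    using cylinder_categories(1) unfolding cylinder_category_def by blast
qed (rule cylinder_categories(1))

sublocale D: Cylinder_Category D
proof
  show "category D"
    using cylinder_categories(2) unfolding cylinder_category_def by blast
qed (rule cylinder_categories(2))

lemma F_hom: "f \<in> hom C X Y \<Longrightarrow> Fa f \<in> hom D (Fo X) (Fo Y)"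
  and F_ident: "X \<in> ob C \<Longrightarrow> Fa (ident C X) = ident D (Fo X)"
  and F_comp: "f \<in> hom C X Y \<Longrightarrow> g \<in> hom C Y Z \<Longrightarrow> Fa (g \<cdot> f) = Fa g \<cdot>\<^bsub>D\<^esub> Fa f"
  and F_cof: "i \<in> cof C \<Longrightarrow> Fa i \<in> cof D"
  and F_pushout: "i \<in> cof C \<Longrightarrow> is_pushout C i f p q \<Longrightarrow> is_pushout D (Fa i) (Fa f) (Fa p) (Fa q)"
  using cyl_morphism unfolding cyl_morphism_def hom_def by auto

lemma lifts_cof_retractions_if_hff:
  assumes "homotopy_fully_faithful C D Fo Fa"
  shows "lifts_cof_retractions_up_to_htpy C D Fo Fa"
  unfolding lifts_cof_retractions_up_to_htpy_def
proof (intro allI impI, elim conjE)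
  fix i A B r
  assume i: "i \<in> hom C A B" "i \<in> cof C"
    and r: "r \<in> hom D (Fo B) (Fo A)" "r \<cdot>\<^bsub>D\<^esub> Fa i = ident D (Fo A)"
  have A: "A \<in> ob C"
    using i(1) by (auto simp: hom_def)
  then have "r \<cdot>\<^bsub>D\<^esub> Fa i = Fa (ident C A)"
    using r(2) F_ident by simp
  then show "\<exists>r'. r' \<in> hom C B A \<and> r' \<cdot> i = ident C A \<and> htpy_rel D (Fa i) (Fa r') r"
    using assms i r C.ident_in_hom[OF A] unfolding homotopy_fully_faithful_def by blast
qed

lemma hff_if_lifts_cof_retractions:
  assumes lift: "lifts_cof_retractions_up_to_htpy C D Fo Fa"
  shows "homotopy_fully_faithful C D Fo Fa"
  unfolding homotopy_fully_faithful_def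
proof (intro allI impI, elim conjE)
  fix i A B x X v
  assume i: "i \<in> hom C A B" "i \<in> cof C" and x: "x \<in> hom C A X"
    and v: "v \<in> hom D (Fo B) (Fo X)" "v \<cdot>\<^bsub>D\<^esub> Fa i = Fa x"
  obtain p q where P: "is_pushout C i x p q"
    using C.pushout_exists[OF i(2), of x] i x by (auto simp: hom_def)
  have pq: "p \<in> hom C B (tgt C p)" "q \<in> hom C X (tgt C p)"
    using C.pushoutD[OF P] i x by (auto simp: hom_def)
  have FX: "Fo X \<in> ob D"
    using F_hom[OF x] D.tgt_ob unfolding hom_def by fastforce
  have F: "Fa i \<in> hom D (Fo A) (Fo B)" "Fa x \<in> hom D (Fo A) (Fo X)"
    "Fa p \<in> hom D (Fo B) (Fo (tgt C p))"
    using F_hom i x pq by blast+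
  obtain r where r: "r \<in> hom D (Fo (tgt C p)) (Fo X)"
    "r \<cdot>\<^bsub>D\<^esub> Fa p = v" "r \<cdot>\<^bsub>D\<^esub> Fa q = ident D (Fo X)"
  proof (rule D.pushout_induce[OF F_pushout[OF i(2) P]])
    show "v \<cdot>\<^bsub>D\<^esub> Fa i = ident D (Fo X) \<cdot>\<^bsub>D\<^esub> Fa x"
      using v(2) F(2) unfolding hom_def by simp
  qed (use v(1) F FX in \<open>simp_all add: hom_def\<close>)
  then obtain r' where r': "r' \<in> hom C (tgt C p) X" "r' \<cdot> q = ident C X" "htpy_rel D (Fa q) (Fa r') r"
    using lift pq(2) C.pushout_cof[OF i(2) P] unfolding lifts_cof_retractions_up_to_htpy_def by blast
  have "(r' \<cdot> p) \<cdot> i = x"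
    using r' pq i x C.pushoutD[OF P] C.comp_reassoc[OF r'(2)] by (simp add: hom_def)
  moreover have "htpy_rel D (Fa i) (Fa (r' \<cdot> p)) v"
    using D.htpy_rel_pushout[OF F_pushout[OF i(2) P] F_cof[OF i(2)] r'(3)] r(2)
      F_comp[OF pq(1) r'(1)]
    by simp
  ultimately show "\<exists>v'. v' \<in> hom C B X \<and> v' \<cdot> i = x \<and> htpy_rel D (Fa i) (Fa v') v"
    using C.comp_in_hom[OF pq(1) r'(1)] by blast
qed

lemma hff_iff_lifts_cof_retractions:
  "homotopy_fully_faithful C D Fo Fa \<longleftrightarrow> lifts_cof_retractions_up_to_htpy C D Fo Fa"
  using lifts_cof_retractions_if_hff hff_if_lifts_cof_retractions by blast

end

theorem mainTheorem1:
  fixes C :: "('o, 'a, 'm) cyl_scheme" and D :: "('p, 'b, 'n) cyl_scheme"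
    and Fo :: "'o \<Rightarrow> 'p" and Fa :: "'a \<Rightarrow> 'b"
  assumes "cyl_morphism C D Fo Fa"
  shows "homotopy_fully_faithful C D Fo Fa \<longleftrightarrow>
    (\<forall>i A B r. i \<in> hom C A B \<and> i \<in> cof C \<and>
       r \<in> hom D (Fo B) (Fo A) \<and> cmp D r (Fa i) = ident D (Fo A) \<longrightarrow>
       (\<exists>r'. r' \<in> hom C B A \<and> cmp C r' i = ident C A \<and> htpy_rel D (Fa i) (Fa r') r))"
proof -
  interpret Cylinder_Morphism C D Fo Fa
    using assms by unfold_locales
  show ?thesis
    using hff_iff_lifts_cof_retractions unfolding lifts_cof_retractions_up_to_htpy_def .
qed

end
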